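(* Let $A\in\mathbb{C}^{n\times n}$, $k=\mathrm{Ind}(A)$, let $l\ge k$ be an integer and $m\in\mathbb{N}=\{1,2,\dots\}$. Then: (a) $A^{\#_m}AA^{\#_m}=A^{\#_m}$; (b) $A_1A^{\#_m}A_1=A_1$ and $A^{\#_m}A_1A^{\#_m}=A^{\#_m}$, where $A_1=AA^{\mathrm{cEP}}A$; (c) $A(A^{\#_m})^2=A^{\#_m}$; (d) $A^{\#_m}A^{l+1}=A^l$; (e) $A^{\#_m}=(A^d)^{m+1}P_{A^l}A^mP_{A^m}$; (f) $A^{\#_m}=A^l(A^{l+m+1})^\dagger A^mP_{A^m}$; (g) $\mathrm{rk}(A^{\#_m})=\mathrm{rk}(A^k)$; (h) $\mathcal{R}(A^{\#_m})=\mathcal{R}(A^k)$; (i) $\mathcal{N}(A^{\#_m})=\mathcal{N}((A^k)^*A^mP_{A^m})$; (j) $A^{\#_m}A^{m+1}=(A^{\mathrm{cEP}})^{m+1}A^{2m+1}$.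
   Context: For $A\in\mathbb{C}^{n\times n}$: $A^*$ conjugate transpose, $A^\dagger$ Moore–Penrose inverse, $\mathcal{R}(\cdot)$, $\mathcal{N}(\cdot)$ column space and null space, $\mathrm{rk}$ rank, $P_A=AA^\dagger$, $A^0=I_n$. The index $\mathrm{Ind}(A)$ is the smallest nonnegative integer $k$ with $\mathcal{R}(A^k)=\mathcal{R}(A^{k+1})$. $A^d$ is the Drazin inverse (unique $X$ with $XAX=X$, $AX=XA$, $XA^{k+1}=A^k$). The core-EP inverse $A^{\mathrm{cEP}}$ is the unique $X$ with $XAX=X$ and $\mathcal{R}(X)=\mathcal{R}(X^* )=\mathcal{R}(A^k)$. For $m\in\mathbb{N}$, the $m$-weak group inverse is $A^{\mathrm{WG}_m}:=(A^{\mathrm{cEP}})^{m+1}A^m$ and the $m$-weak core inverse is $A^{\#_m}:=A^{\mathrm{WG}_m}P_{A^m}$. *)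

theory Defs
  imports "HOL-Analysis.Analysis"
begin

type_synonym 'n cmat = "complex^'n^'n"

definition cstar :: "complex^'n^'m \<Rightarrow> complex^'m^'n" where
  "cstar A = (\<chi> i j. cnj (A $ j $ i))"

fun mpow :: "'n cmat \<Rightarrow> nat \<Rightarrow> ('n::finite) cmat" where
  "mpow A 0 = mat 1"
| "mpow A (Suc k) = A ** mpow A k"

definition colsp :: "complex^'n^'m \<Rightarrow> (complex^'m) set" where
  "colsp A = range (\<lambda>x. A *v x)"

definition nullsp :: "complex^'n^'m \<Rightarrow> (complex^'n) set" where
  "nullsp A = {x. A *v x = 0}"

definition mp_inv :: "complex^'n^'m \<Rightarrow> complex^'m^'n" where
  "mp_inv A = (THE X. A ** X ** A = A \<and> X ** A ** X = X \<and>
                      cstar (A ** X) = A ** X \<and> cstar (X ** A) = X ** A)"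

definition proj :: "('n::finite) cmat \<Rightarrow> 'n cmat" where
  "proj A = A ** mp_inv A"

definition ind :: "('n::finite) cmat \<Rightarrow> nat" where
  "ind A = (LEAST k. colsp (mpow A k) = colsp (mpow A (Suc k)))"

definition drazin :: "('n::finite) cmat \<Rightarrow> 'n cmat" where
  "drazin A = (THE X. X ** A ** X = X \<and> A ** X = X ** A \<and>
                      X ** mpow A (Suc (ind A)) = mpow A (ind A))"

definition coreEP :: "('n::finite) cmat \<Rightarrow> 'n cmat" where
  "coreEP A = (THE X. X ** A ** X = X \<and> colsp X = colsp (mpow A (ind A)) \<and>
                      colsp (cstar X) = colsp (mpow A (ind A)))"

definition mWG :: "nat \<Rightarrow> ('n::finite) cmat \<Rightarrow> 'n cmat" where
  "mWG m A = mpow (coreEP A) (Suc m) ** mpow A m"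

definition mWC :: "nat \<Rightarrow> ('n::finite) cmat \<Rightarrow> 'n cmat" where
  "mWC m A = mWG m A ** proj (mpow A m)"

end

theory Submission
  imports Defs
begin

(* Let k = ind A and K = A^k. Since R(K) = R(A K), the matrix A maps R(K) onto itself, hence
   bijectively; this yields the Drazin inverse, and the core-EP inverse is A^d P_K. Consequently
   A^{#m} = (A^d)^(m+1) P_K A^m P_(A^m), and on every matrix whose columns lie in R(K) it acts
   exactly as A^d: both projectors fix such columns and (A^d)^(m+1) A^m = A^d. Since moreover
   R(A^{#m}) is contained in R(K), all ten identities reduce to A^d A M = M for R(M) in R(K)
   and to A^d A^(l+1) = A^l for l >= k. *)

lemma mpow_add: "mpow A (i + j) = mpow A i ** mpow A j"
  by (induction i) (auto simp: matrix_mul_assoc)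

lemma mpow_Suc_right: "mpow A (Suc k) = mpow A k ** A"
  by (induction k) (auto simp: matrix_mul_assoc)

lemma mpow_commute: "A ** X = X ** A \<Longrightarrow> mpow A k ** X = X ** mpow A k"
  by (induction k) (auto, metis matrix_mul_assoc)

lemma mpow_mult_self_commute: "A ** mpow A k = mpow A k ** A"
  by (metis mpow.simps(2) mpow_Suc_right)

lemma cstar_mult: "cstar ((A::complex^'n^'m) ** (B::complex^'p^'n)) = cstar B ** cstar A"
  by (simp add: cstar_def matrix_matrix_mult_def vec_eq_iff mult.commute)

lemma cstar_cstar [simp]: "cstar (cstar A) = A"
  by (simp add: cstar_def vec_eq_iff)

lemma cstar_adjoint: "((M::complex^'n^'m) *v x) \<bullet> y = x \<bullet> (cstar M *v y)"
proof -
  have inner_sum: "u \<bullet> v = Re (\<Sum>i\<in>UNIV. u$i * cnj (v$i))" for u v :: "complex^'k"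
    by (simp add: inner_vec_def inner_complex_def)
  have "(\<Sum>i\<in>UNIV. (M *v x)$i * cnj (y$i)) = (\<Sum>i\<in>UNIV. \<Sum>j\<in>UNIV. M$i$j * x$j * cnj (y$i))"
    by (simp add: matrix_vector_mult_def sum_distrib_right)
  also have "\<dots> = (\<Sum>j\<in>UNIV. \<Sum>i\<in>UNIV. M$i$j * x$j * cnj (y$i))"
    by (rule sum.swap)
  also have "\<dots> = (\<Sum>j\<in>UNIV. x$j * cnj ((cstar M *v y)$j))"
    by (simp add: matrix_vector_mult_def cstar_def sum_distrib_left mult_ac)
  finally show ?thesis
    unfolding inner_sum by (rule arg_cong)
qed

lemma colsp_mult_subset: "colsp (A ** B) \<subseteq> colsp A"
  by (auto simp: colsp_def matrix_vector_mul_assoc[symmetric])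

lemma mult_vec_in_colsp: "M *v x \<in> colsp M"
  by (auto simp: colsp_def)

lemma subspace_colsp: "subspace (colsp (M::complex^'n^'m))"
  unfolding colsp_def
  by (rule real_vector.linear_subspace_image[OF matrix_vector_mul_linear subspace_UNIV])

lemma colsp_subset_iff_factor:
  fixes B :: "complex^'p^'m" and C :: "complex^'q^'m"
  shows "colsp B \<subseteq> colsp C \<longleftrightarrow> (\<exists>Z::complex^'p^'q. B = C ** Z)"
proof
  assume "colsp B \<subseteq> colsp C"
  then have "\<forall>j. \<exists>z. B *v axis j 1 = C *v z"
    by (auto simp: colsp_def)
  then obtain f where f: "\<And>j. B *v axis j 1 = C *v f j"
    by metis
  have "B $ i $ j = (C ** (\<chi> i j. f j $ i)) $ i $ j" for i j
  proof -
    have "B $ i $ j = (B *v axis j 1) $ i"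
      by (simp add: matrix_vector_mult_def axis_def if_distrib cong: if_cong)
    then show ?thesis
      by (simp only: f) (simp add: matrix_matrix_mult_def matrix_vector_mult_def)
  qed
  then show "\<exists>Z. B = C ** Z"
    by (auto simp: vec_eq_iff)
qed (use colsp_mult_subset in blast)

lemma left_identity_on_colsp:
  assumes "E ** K = K" and "colsp M \<subseteq> colsp K"
  shows "E ** M = M"
proof -
  obtain Z where "M = K ** Z"
    using assms(2) colsp_subset_iff_factor by blast
  then show ?thesis
    using assms(1) by (metis matrix_mul_assoc)
qed

lemma rank_mult_le_left: "rank ((B::complex^'n^'m) ** (C::complex^'p^'n)) \<le> rank B"
proof -
  have row_mult: "row i (B ** C) = transpose C *v row i B" for i
    by (auto simp: vec_eq_iff row_def matrix_matrix_mult_def matrix_vector_mult_def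
        transpose_def mult.commute intro!: sum.cong)
  have "rows (B ** C) = (*v) (transpose C) ` rows B"
    by (auto simp: rows_def row_mult)
  then have "rank (B ** C) = vec.dim ((*v) (transpose C) ` rows B)"
    by (simp add: row_rank_def_gen)
  also have "\<dots> \<le> vec.dim (rows B)"
    by (rule vec.dim_image_le[OF matrix_vector_mul_linear_gen])
  finally show ?thesis
    by (simp add: row_rank_def_gen)
qed

lemma rank_eq_if_colsp_eq:
  fixes B C :: "complex^'n^'m"
  assumes "colsp B = colsp C"
  shows "rank B = rank C"
proof -
  obtain Z W where "B = C ** Z" "C = B ** W"
    using assms colsp_subset_iff_factor by (metis order_refl)
  then show ?thesis
    using rank_mult_le_left by (metis le_antisym)
qed

lemma nullsp_eq_if_mutual_factor:
  assumes "B = E ** C" and "C = F ** B"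
  shows "nullsp B = nullsp C"
proof -
  have "B *v x = 0 \<longleftrightarrow> C *v x = 0" for x
    using assms by (metis matrix_vector_mul_assoc matrix_vector_mult_0_right)
  then show ?thesis
    by (simp add: nullsp_def)
qed

section \<open>The Moore--Penrose inverse and orthogonal projectors\<close>

text \<open>Split \<open>y \<in> R(B\<^sup>*)\<close> orthogonally along \<open>R(B\<^sup>*B)\<close>: the orthogonal part \<open>t = B\<^sup>*u\<close>
  satisfies \<open>|Bt|\<^sup>2 = \<langle>t, B\<^sup>*Bt\<rangle> = 0\<close>, hence \<open>|t|\<^sup>2 = \<langle>Bt, u\<rangle> = 0\<close>.\<close>

lemma colsp_cstar_subset_gram: "colsp (cstar B) \<subseteq> colsp (cstar B ** (B::complex^'n^'m))"
proof
  fix y assume y: "y \<in> colsp (cstar B)"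
  let ?S = "colsp (cstar B ** B)"
  have span_S: "span ?S = ?S"
    using subspace_colsp span_eq_iff by blast
  obtain s t where s: "s \<in> span ?S" and t: "\<And>w. w \<in> span ?S \<Longrightarrow> orthogonal t w"
    and yst: "y = s + t"
    using orthogonal_subspace_decomp_exists by metis
  have "s \<in> colsp (cstar B)"
    using s span_S colsp_mult_subset by blast
  then have "t \<in> colsp (cstar B)"
    using y yst subspace_colsp by (metis add_diff_cancel_left' subspace_diff)
  then obtain u where u: "t = cstar B *v u"
    by (auto simp: colsp_def)
  have "t \<bullet> ((cstar B ** B) *v t) = 0"
    using t mult_vec_in_colsp span_base orthogonal_def by blast
  then have "(B *v t) \<bullet> (B *v t) = 0"
    by (simp add: cstar_adjoint matrix_vector_mul_assoc)
  then have "B *v t = 0"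
    by simp
  moreover have "t \<bullet> t = (B *v t) \<bullet> u"
    using u cstar_adjoint by metis
  ultimately have "t = 0"
    by simp
  then show "y \<in> ?S"
    using yst s span_S by simp
qed

lemma hermitian_projector_from_gram:
  fixes B :: "complex^'n^'m"
  assumes W: "cstar B = cstar B ** B ** W"
  shows "cstar (B ** W) = B ** W" and "B ** W ** (B ** W) = B ** W" and "B ** W ** B = B"
proof -
  let ?P = "B ** W"
  have gram: "cstar ?P ** ?P = cstar ?P"
    by (metis W cstar_mult matrix_mul_assoc)
  then have herm: "cstar ?P = ?P"
    by (metis cstar_cstar cstar_mult)
  show "cstar ?P = ?P"
    by (rule herm)
  show "?P ** ?P = ?P"
    using gram by (simp only: herm)
  have "B = cstar (cstar B ** B ** W)"
    using W by (metis cstar_cstar)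
  also have "\<dots> = cstar ?P ** B"
    by (simp add: cstar_mult matrix_mul_assoc)
  finally show "?P ** B = B"
    by (simp only: herm)
qed

lemma mp_inv_exists:
  fixes B :: "complex^'n^'m"
  shows "\<exists>X. B ** X ** B = B \<and> X ** B ** X = X \<and> cstar (B ** X) = B ** X \<and> cstar (X ** B) = X ** B"
proof -
  obtain W where W: "cstar B = cstar B ** B ** W"
    using colsp_cstar_subset_gram[of B] colsp_subset_iff_factor by (metis matrix_mul_assoc)
  obtain V where V: "cstar (cstar B) = cstar (cstar B) ** cstar B ** V"
    using colsp_cstar_subset_gram[of "cstar B"] colsp_subset_iff_factor by (metis matrix_mul_assoc)
  \<comment> \<open>\<open>P\<close> and \<open>Q\<close> are the orthogonal projectors onto \<open>R(B)\<close> and \<open>R(B\<^sup>*)\<close>\<close>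
  define P where "P = B ** W"
  define Q where "Q = cstar B ** V"
  have P: "cstar P = P" "P ** P = P" "P ** B = B"
    using hermitian_projector_from_gram[OF W] P_def by auto
  have Q: "cstar Q = Q" "Q ** Q = Q" "Q ** cstar B = cstar B"
    using hermitian_projector_from_gram[OF V] Q_def by auto
  have BQ: "B ** Q = B"
    using arg_cong[OF Q(3), of cstar] by (simp add: cstar_mult Q(1))
  have "Q = cstar V ** B"
    using Q(1) Q_def by (metis cstar_mult cstar_cstar)
  then have QWB: "Q ** W ** B = Q"
    using P(3) P_def by (metis matrix_mul_assoc)
  define X where "X = Q ** W ** P"
  have BX: "B ** X = P"
    by (simp add: X_def matrix_mul_assoc BQ P_def[symmetric] P(2))
  have XB: "X ** B = Q"
    by (metis X_def P(3) QWB matrix_mul_assoc)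
  have "X ** B ** X = X"
    using XB by (metis BX X_def P(2) Q(2) matrix_mul_assoc)
  then show ?thesis
    using BX XB P(1,3) Q(1) by auto
qed

lemma mp_inv_unique:
  fixes B :: "complex^'n^'m"
  assumes "B ** X ** B = B" "X ** B ** X = X" "cstar (B ** X) = B ** X" "cstar (X ** B) = X ** B"
    and "B ** Y ** B = B" "Y ** B ** Y = Y" "cstar (B ** Y) = B ** Y" "cstar (Y ** B) = Y ** B"
  shows "X = Y"
proof -
  have "X = X ** cstar (B ** X)"
    using assms(2,3) by (simp add: matrix_mul_assoc)
  also have "\<dots> = X ** cstar X ** cstar (B ** Y ** B)"
    using assms(5) by (simp add: cstar_mult matrix_mul_assoc)
  also have "\<dots> = X ** cstar (B ** X) ** cstar (B ** Y)"
    by (simp add: cstar_mult matrix_mul_assoc)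
  also have "\<dots> = X ** B ** Y"
    using assms(2,3,7) by (simp add: matrix_mul_assoc)
  finally have X: "X = X ** B ** Y" .
  have "Y = cstar (Y ** B) ** Y"
    using assms(6,8) by simp
  also have "\<dots> = cstar (B ** X ** B) ** cstar Y ** Y"
    using assms(1) by (simp add: cstar_mult matrix_mul_assoc)
  also have "\<dots> = cstar (X ** B) ** cstar (Y ** B) ** Y"
    by (simp add: cstar_mult matrix_mul_assoc)
  also have "\<dots> = X ** B ** (Y ** B ** Y)"
    using assms(4,8) by (simp add: matrix_mul_assoc)
  finally show ?thesis
    using X assms(6) by simp
qed

lemma mp_inv_penrose:
  fixes B :: "complex^'n^'m"
  shows "B ** mp_inv B ** B = B" and "mp_inv B ** B ** mp_inv B = mp_inv B"
    and "cstar (B ** mp_inv B) = B ** mp_inv B" and "cstar (mp_inv B ** B) = mp_inv B ** B"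
proof -
  obtain X where X: "B ** X ** B = B \<and> X ** B ** X = X \<and> cstar (B ** X) = B ** X \<and> cstar (X ** B) = X ** B"
    using mp_inv_exists by blast
  have "B ** mp_inv B ** B = B \<and> mp_inv B ** B ** mp_inv B = mp_inv B \<and>
        cstar (B ** mp_inv B) = B ** mp_inv B \<and> cstar (mp_inv B ** B) = mp_inv B ** B"
    unfolding mp_inv_def by (rule theI[of _ X]) (use X mp_inv_unique in blast)+
  then show "B ** mp_inv B ** B = B" and "mp_inv B ** B ** mp_inv B = mp_inv B"
    and "cstar (B ** mp_inv B) = B ** mp_inv B" and "cstar (mp_inv B ** B) = mp_inv B ** B"
    by auto
qed

lemma proj_mult_self: "proj B ** B = B"
  unfolding proj_def by (rule mp_inv_penrose(1))

lemma cstar_proj: "cstar (proj B) = proj B"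
  unfolding proj_def by (rule mp_inv_penrose(3))

lemma colsp_proj: "colsp (proj B) = colsp B"
  by (metis proj_def proj_mult_self colsp_mult_subset subset_antisym)

lemma proj_mult_colsp: "colsp M \<subseteq> colsp B \<Longrightarrow> proj B ** M = M"
  by (rule left_identity_on_colsp[OF proj_mult_self])

lemma proj_cong:
  assumes "colsp B = colsp C"
  shows "proj B = proj C"
proof -
  have "proj B = cstar (proj C ** proj B)"
    using assms by (simp add: proj_mult_colsp colsp_proj cstar_proj)
  also have "\<dots> = proj B ** proj C"
    by (simp add: cstar_mult cstar_proj)
  also have "\<dots> = proj C"
    using assms by (simp add: proj_mult_colsp colsp_proj)
  finally show ?thesis .
qed

lemma nullsp_proj_mult: "nullsp (proj B ** M) = nullsp (cstar B ** M)"
proof (rule nullsp_eq_if_mutual_factor)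
  have "proj B = cstar (mp_inv B) ** cstar B"
    using cstar_proj[of B] by (simp add: proj_def cstar_mult)
  then show "proj B ** M = cstar (mp_inv B) ** (cstar B ** M)"
    by (simp add: matrix_mul_assoc)
  have "cstar (proj B ** B) = cstar B"
    by (simp add: proj_mult_self)
  then have "cstar B ** proj B = cstar B"
    by (simp add: cstar_mult cstar_proj)
  then show "cstar B ** M = cstar B ** (proj B ** M)"
    by (simp add: matrix_mul_assoc)
qed

section \<open>The index and the core part of a matrix\<close>

lemma colsp_mpow_antimono: "j \<le> i \<Longrightarrow> colsp (mpow A i) \<subseteq> colsp (mpow A j)"
  by (metis le_Suc_ex mpow_add colsp_mult_subset)

lemma colsp_mpow_Suc: "colsp (mpow A (Suc k)) = (*v) A ` colsp (mpow A k)"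
  by (auto simp: colsp_def matrix_vector_mul_assoc[symmetric] image_image)

lemma colsp_mpow_stable:
  assumes "colsp (mpow A k) = colsp (mpow A (Suc k))"
  shows "colsp (mpow A (k + j)) = colsp (mpow A k)"
proof (induction j)
  case (Suc j)
  have "colsp (mpow A (k + Suc j)) = (*v) A ` colsp (mpow A k)"
    using Suc colsp_mpow_Suc[of A "k + j"] by simp
  also have "\<dots> = colsp (mpow A (Suc k))"
    by (rule colsp_mpow_Suc[symmetric])
  also have "\<dots> = colsp (mpow A k)"
    by (rule assms[symmetric])
  finally show ?case .
qed simp

lemma colsp_mpow_stabilizes: "\<exists>k. colsp (mpow A k) = colsp (mpow A (Suc k))"
proof (rule ccontr)
  assume "\<nexists>k. colsp (mpow A k) = colsp (mpow A (Suc k))"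
  then have strict: "colsp (mpow A (Suc k)) \<subset> colsp (mpow A k)" for k
    using colsp_mpow_antimono[of k "Suc k" A] by auto
  have "dim (colsp (mpow A k)) + k \<le> DIM(complex^'a)" for k
  proof (induction k)
    case 0
    show ?case
      using dim_subset_UNIV[of "colsp (mpow A 0)"] by simp
  next
    case (Suc k)
    have "span (colsp (mpow A (Suc k))) \<subset> span (colsp (mpow A k))"
      using strict[of k] subspace_colsp span_eq_iff by metis
    then have "dim (colsp (mpow A (Suc k))) < dim (colsp (mpow A k))"
      by (rule dim_psubset)
    then show ?case
      using Suc by simp
  qed
  from this[of "Suc DIM(complex^'a)"] show False
    by simp
qed

lemma colsp_mpow_ind_Suc: "colsp (mpow A (ind A)) = colsp (mpow A (Suc (ind A)))"
  unfolding ind_def using colsp_mpow_stabilizes by (rule LeastI_ex)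

lemma colsp_mpow_ge_ind: "ind A \<le> j \<Longrightarrow> colsp (mpow A j) = colsp (mpow A (ind A))"
  using colsp_mpow_stable[OF colsp_mpow_ind_Suc, of A "j - ind A"] by simp

lemma colsp_mpow_ind_subset: "colsp (mpow A (ind A)) \<subseteq> colsp (mpow A j)"
  using colsp_mpow_antimono[of j "ind A" A] colsp_mpow_ge_ind[of A j] by (cases "j \<le> ind A") auto

lemma colsp_mpow_mult_in_core:
  assumes "colsp M \<subseteq> colsp (mpow A (ind A))"
  shows "colsp (mpow A j ** M) \<subseteq> colsp (mpow A (ind A))"
proof -
  obtain Z where "M = mpow A (ind A) ** Z"
    using assms colsp_subset_iff_factor by blast
  then have "mpow A j ** M = mpow A (ind A) ** (mpow A j ** Z)"
    by (simp add: matrix_mul_assoc flip: mpow_add add.commute)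
  then show ?thesis
    by (simp add: colsp_mult_subset)
qed

lemma image_colsp_mpow_ind: "(*v) A ` colsp (mpow A (ind A)) = colsp (mpow A (ind A))"
  by (metis colsp_mpow_Suc colsp_mpow_ind_Suc)

lemma surj_on_subspace_imp_kernel_trivial:
  fixes f :: "'a::euclidean_space \<Rightarrow> 'a"
  assumes "linear f" and "subspace S" and "f ` S = S" and "x \<in> S" and "f x = 0"
  shows "x = 0"
proof (rule ccontr)
  assume "x \<noteq> 0"
  then obtain B where B: "x \<in> B" "B \<subseteq> S" "independent B" "S \<subseteq> span B"
    using maximal_independent_subset_extend[of "{x}" S] assms(4) by auto
  have fin: "finite B"
    using B(3) finiteI_independent by blast
  have "S \<subseteq> span (f ` B)"
    using assms(1,3) B(4) span_linear_image by blast
  also have "\<dots> \<subseteq> span (f ` (B - {x}))"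
    using assms(5) span_insert_0 span_mono by (metis image_insert insert_Diff B(1) subset_insertI)
  finally have "dim S \<le> card (f ` (B - {x}))"
    by (rule dim_le_card) (use fin in auto)
  also have "\<dots> < card B"
    using fin B(1) card_image_le[of "B - {x}" f] card_Diff1_less[of B x] by simp
  finally show False
    using basis_card_eq_dim[OF B(2,4,3)] by simp
qed

text \<open>Since \<open>A\<close> maps the core part \<open>R(A\<^sup>k)\<close>, \<open>k = ind A\<close>, onto itself, it is injective there.\<close>

lemma mpow_mult_vec_on_core_eq_0:
  "x \<in> colsp (mpow A (ind A)) \<Longrightarrow> mpow A j *v x = 0 \<Longrightarrow> x = 0"
proof (induction j arbitrary: x)
  case (Suc j)
  have "mpow A j *v (A *v x) = 0"
    using Suc.prems(2) unfolding mpow_Suc_right by (simp add: matrix_vector_mul_assoc)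
  moreover have "A *v x \<in> colsp (mpow A (ind A))"
    using Suc.prems(1) image_colsp_mpow_ind[of A] by blast
  ultimately have "A *v x = 0"
    by (rule Suc.IH[rotated])
  with Suc.prems(1) show ?case
    by (rule surj_on_subspace_imp_kernel_trivial[OF matrix_vector_mul_linear subspace_colsp
          image_colsp_mpow_ind])
qed simp

lemma mpow_mult_cancel_on_core:
  assumes "colsp M \<subseteq> colsp (mpow A (ind A))" and "colsp N \<subseteq> colsp (mpow A (ind A))"
    and "mpow A j ** M = mpow A j ** N"
  shows "M = N"
proof -
  have "M *v x - N *v x = 0" for x
  proof (rule mpow_mult_vec_on_core_eq_0)
    show "M *v x - N *v x \<in> colsp (mpow A (ind A))"
      using assms(1,2) mult_vec_in_colsp subspace_colsp by (metis subsetD subspace_diff)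
    show "mpow A j *v (M *v x - N *v x) = 0"
      using assms(3) by (simp add: matrix_vector_mult_diff_distrib matrix_vector_mul_assoc)
  qed
  then show ?thesis
    by (simp add: matrix_eq)
qed

section \<open>The Drazin inverse\<close>

lemma drazin_exists:
  "\<exists>X. X ** A ** X = X \<and> A ** X = X ** A \<and> X ** mpow A (Suc (ind A)) = mpow A (ind A)"
proof -
  let ?K = "mpow A (ind A)" and ?A1 = "mpow A (Suc (ind A))" and ?T = "mpow A (2 * ind A + 1)"
  have core: "colsp (?K ** Z) \<subseteq> colsp ?K" for Z
    by (rule colsp_mult_subset)
  have "colsp ?K \<subseteq> colsp ?T"
    using colsp_mpow_ge_ind[of A "2 * ind A + 1"] by simp
  then obtain Y where Y: "?T ** Y = ?K"
    using colsp_subset_iff_factor by metis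
  have A1K: "?A1 ** ?K = ?T" and KA1: "?K ** ?A1 = ?T"
    by (simp_all only: mpow_add[symmetric]) (simp_all add: mult_2)
  have AK: "A ** ?K = ?A1" and KA: "?K ** A = ?A1"
    by (simp_all add: mpow_Suc_right[symmetric])
  have AA1: "?A1 ** A = A ** ?A1"
    by (rule mpow_mult_self_commute[symmetric])
  define D where "D = ?K ** Y"
  have DA1: "D ** ?A1 = ?K"
  proof (rule mpow_mult_cancel_on_core[where j = "Suc (ind A)"])
    have "?A1 ** (D ** ?A1) = ?T ** Y ** ?A1"
      by (simp only: D_def matrix_mul_assoc A1K)
    also have "\<dots> = ?A1 ** ?K"
      by (simp only: Y KA1 A1K)
    finally show "?A1 ** (D ** ?A1) = ?A1 ** ?K" .
  qed (use core D_def in \<open>simp_all flip: matrix_mul_assoc\<close>)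
  have "A ** D = D ** A"
  proof (rule mpow_mult_cancel_on_core[where j = "Suc (ind A)"])
    have "?A1 ** (A ** D) = A ** (?A1 ** ?K ** Y)"
      by (simp only: D_def matrix_mul_assoc AA1)
    also have "\<dots> = A ** ?K"
      by (simp only: A1K Y)
    also have "\<dots> = ?A1 ** (D ** A)"
      by (simp only: D_def matrix_mul_assoc A1K Y KA AK)
    finally show "?A1 ** (A ** D) = ?A1 ** (D ** A)" .
    show "colsp (A ** D) \<subseteq> colsp ?K"
      using colsp_mpow_mult_in_core[of D A 1] core[of Y, folded D_def] by simp
  qed (use core D_def in \<open>simp_all flip: matrix_mul_assoc\<close>)
  moreover have "D ** A ** D = D"
  proof -
    have "D ** A ** D = D ** (A ** ?K) ** Y"
      by (simp only: D_def matrix_mul_assoc)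
    also have "\<dots> = ?K ** Y"
      by (simp only: AK DA1)
    finally show ?thesis
      by (simp only: D_def)
  qed
  ultimately show ?thesis
    using DA1 by blast
qed

lemma commuting_outer_inverse_mpow:
  assumes "X ** A ** X = X" and "A ** X = X ** A"
  shows "X = mpow X (Suc j) ** mpow A j"
proof (induction j)
  case (Suc j)
  have XXA: "X ** X ** A = X"
    using assms by (metis matrix_mul_assoc)
  have "X = mpow X j ** (X ** X ** A) ** mpow A j"
    using Suc by (simp only: XXA mpow_Suc_right)
  also have "\<dots> = mpow X (Suc (Suc j)) ** mpow A (Suc j)"
    by (simp only: mpow_Suc_right[of X] mpow.simps(2)[of A] matrix_mul_assoc)
  finally show ?case .
qed simp

lemma commuting_outer_inverse_mult_eq_mpow:
  assumes "X ** A ** X = X" and "A ** X = X ** A"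
  shows "X ** A = mpow X (Suc j) ** mpow A (Suc j)"
  using commuting_outer_inverse_mpow[OF assms, of j] by (metis mpow_Suc_right matrix_mul_assoc)

lemma drazin_unique:
  assumes X: "X ** A ** X = X" "A ** X = X ** A" "X ** mpow A (Suc k) = mpow A k"
    and Y: "Y ** A ** Y = Y" "A ** Y = Y ** A" "Y ** mpow A (Suc k) = mpow A k"
  shows "X = Y"
proof -
  have YA: "mpow A i ** Y = Y ** mpow A i" for i
    using mpow_commute Y(2) by blast
  have YA': "mpow Y i ** mpow A j = mpow A j ** mpow Y i" for i j
    using mpow_commute YA by metis
  have "X = mpow X (Suc k) ** (Y ** mpow A (Suc k))"
    using commuting_outer_inverse_mpow[OF X(1,2)] Y(3) by metis
  also have "\<dots> = (mpow X (Suc k) ** mpow A (Suc k)) ** Y"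
    by (simp only: YA[symmetric] matrix_mul_assoc[symmetric])
  also have "\<dots> = X ** A ** Y"
    by (simp only: commuting_outer_inverse_mult_eq_mpow[OF X(1,2), symmetric])
  finally have XAY: "X = X ** A ** Y" .
  have "Y = mpow A k ** mpow Y (Suc k)"
    using commuting_outer_inverse_mpow[OF Y(1,2)] YA' by metis
  also have "\<dots> = X ** (mpow A (Suc k) ** mpow Y (Suc k))"
    by (simp only: X(3)[symmetric] matrix_mul_assoc)
  also have "\<dots> = X ** (Y ** A)"
    by (simp only: YA'[symmetric] commuting_outer_inverse_mult_eq_mpow[OF Y(1,2), symmetric])
  also have "\<dots> = X ** A ** Y"
    by (simp only: Y(2)[symmetric] matrix_mul_assoc)
  finally show ?thesis
    using XAY by simp
qed

lemma drazin_characterization: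
  "drazin A ** A ** drazin A = drazin A \<and> A ** drazin A = drazin A ** A
    \<and> drazin A ** mpow A (Suc (ind A)) = mpow A (ind A)"
proof -
  obtain X where X: "X ** A ** X = X \<and> A ** X = X ** A \<and> X ** mpow A (Suc (ind A)) = mpow A (ind A)"
    using drazin_exists by blast
  show ?thesis
    unfolding drazin_def by (rule theI[of _ X]) (use X drazin_unique in blast)+
qed

lemmas drazin_outer = drazin_characterization[THEN conjunct1]
lemmas drazin_commute = drazin_characterization[THEN conjunct2, THEN conjunct1]
lemmas drazin_mpow_Suc_ind = drazin_characterization[THEN conjunct2, THEN conjunct2]

lemma colsp_drazin_mult: "colsp (drazin A ** Z) \<subseteq> colsp (mpow A (ind A))"
proof -
  have "drazin A = mpow (drazin A) (Suc (ind A)) ** mpow A (ind A)"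
    by (rule commuting_outer_inverse_mpow[OF drazin_outer drazin_commute])
  also have "\<dots> = mpow A (ind A) ** mpow (drazin A) (Suc (ind A))"
    by (metis mpow_commute drazin_commute)
  finally show ?thesis
    by (metis colsp_mult_subset matrix_mul_assoc)
qed

lemma drazin_mult_A_on_core:
  assumes "colsp M \<subseteq> colsp (mpow A (ind A))"
  shows "drazin A ** A ** M = M"
proof (rule left_identity_on_colsp[OF _ assms])
  show "drazin A ** A ** mpow A (ind A) = mpow A (ind A)"
    using drazin_mpow_Suc_ind by (simp add: matrix_mul_assoc)
qed

lemma drazin_mult_mpow_Suc: "ind A \<le> n \<Longrightarrow> drazin A ** mpow A (Suc n) = mpow A n"
  using drazin_mult_A_on_core[of "mpow A n" A] colsp_mpow_ge_ind[of A n]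
  by (simp add: matrix_mul_assoc)

lemma mpow_drazin_mult_mpow: "ind A \<le> j \<Longrightarrow> mpow (drazin A) i ** mpow A (i + j) = mpow A j"
proof (induction i)
  case (Suc i)
  have "mpow (drazin A) (Suc i) ** mpow A (Suc i + j)
      = mpow (drazin A) i ** (drazin A ** mpow A (Suc (i + j)))"
    by (simp only: mpow_Suc_right[of "drazin A"] matrix_mul_assoc add_Suc)
  also have "\<dots> = mpow (drazin A) i ** mpow A (i + j)"
    using Suc.prems by (simp only: drazin_mult_mpow_Suc trans_le_add2)
  finally show ?case
    using Suc by simp
qed simp

section \<open>The core-EP inverse\<close>

lemma coreEP_unique:
  assumes X: "X ** A ** X = X" "colsp X = S" "colsp (cstar X) = S"
    and Y: "Y ** A ** Y = Y" "colsp Y = S" "colsp (cstar Y) = S"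
  shows "X = Y"
proof -
  have YAX: "Y ** A ** X = X"
    by (rule left_identity_on_colsp[OF Y(1)]) (simp add: X(2) Y(2))
  have "cstar X ** cstar A ** cstar X = cstar X"
    using arg_cong[OF X(1), of cstar] by (simp add: cstar_mult matrix_mul_assoc)
  then have "cstar X ** cstar A ** cstar Y = cstar Y"
    by (rule left_identity_on_colsp) (simp add: X(3) Y(3))
  then have "cstar (Y ** A ** X) = cstar Y"
    by (simp add: cstar_mult matrix_mul_assoc)
  then have "Y ** A ** X = Y"
    by (metis cstar_cstar)
  then show ?thesis
    using YAX by simp
qed

lemma drazin_proj_outer:
  "drazin A ** proj (mpow A (ind A)) ** A ** (drazin A ** proj (mpow A (ind A)))
    = drazin A ** proj (mpow A (ind A))"
proof -
  have "proj (mpow A (ind A)) ** (A ** drazin A) = A ** drazin A"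
    using colsp_drazin_mult[of A A] by (simp add: proj_mult_colsp drazin_commute)
  then show ?thesis
    using drazin_outer by (metis matrix_mul_assoc)
qed

lemma colsp_drazin_proj: "colsp (drazin A ** proj (mpow A (ind A))) = colsp (mpow A (ind A))"
proof
  have "proj (mpow A (ind A)) ** mpow A (Suc (ind A)) = mpow A (Suc (ind A))"
    by (simp add: proj_mult_colsp colsp_mpow_ind_Suc)
  then have "drazin A ** proj (mpow A (ind A)) ** mpow A (Suc (ind A)) = mpow A (ind A)"
    using drazin_mpow_Suc_ind by (metis matrix_mul_assoc)
  then show "colsp (mpow A (ind A)) \<subseteq> colsp (drazin A ** proj (mpow A (ind A)))"
    by (metis colsp_mult_subset)
qed (rule colsp_drazin_mult)

lemma colsp_cstar_drazin_proj:
  "colsp (cstar (drazin A ** proj (mpow A (ind A)))) = colsp (mpow A (ind A))"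
proof
  let ?P = "proj (mpow A (ind A))"
  have "cstar (drazin A ** ?P) = ?P ** cstar (drazin A)"
    by (simp add: cstar_mult cstar_proj)
  then show "colsp (cstar (drazin A ** ?P)) \<subseteq> colsp (mpow A (ind A))"
    by (metis colsp_mult_subset colsp_proj)
  have "A ** (drazin A ** ?P) = ?P"
    using drazin_mult_A_on_core[of ?P A] by (simp add: colsp_proj drazin_commute matrix_mul_assoc)
  then have "?P = cstar (drazin A ** ?P) ** cstar A"
    by (metis cstar_mult cstar_proj)
  then show "colsp (mpow A (ind A)) \<subseteq> colsp (cstar (drazin A ** ?P))"
    by (metis colsp_mult_subset colsp_proj)
qed

lemma coreEP_eq_drazin_proj: "coreEP A = drazin A ** proj (mpow A (ind A))"
  unfolding coreEP_def
proof (rule the_equality)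
  show "drazin A ** proj (mpow A (ind A)) ** A ** (drazin A ** proj (mpow A (ind A)))
      = drazin A ** proj (mpow A (ind A))
    \<and> colsp (drazin A ** proj (mpow A (ind A))) = colsp (mpow A (ind A))
    \<and> colsp (cstar (drazin A ** proj (mpow A (ind A)))) = colsp (mpow A (ind A))"
    using drazin_proj_outer colsp_drazin_proj colsp_cstar_drazin_proj by blast
  then show "X = drazin A ** proj (mpow A (ind A))"
    if "X ** A ** X = X \<and> colsp X = colsp (mpow A (ind A)) \<and> colsp (cstar X) = colsp (mpow A (ind A))"
    for X
    using that coreEP_unique by blast
qed

section \<open>The \<open>m\<close>-weak core inverse\<close>

lemma mpow_drazin_proj:
  "mpow (drazin A ** proj (mpow A (ind A))) (Suc j) = mpow (drazin A) (Suc j) ** proj (mpow A (ind A))"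
proof (induction j)
  case (Suc j)
  let ?D = "drazin A" and ?P = "proj (mpow A (ind A))"
  have "?P ** mpow ?D (Suc j) = mpow ?D (Suc j)"
    using colsp_drazin_mult[of A "mpow ?D j"] by (simp add: proj_mult_colsp)
  with Suc show ?case
    by (metis mpow.simps(2) matrix_mul_assoc)
qed simp

lemma mWC_eq_drazin:
  "mWC m A = mpow (drazin A) (Suc m) ** proj (mpow A (ind A)) ** mpow A m ** proj (mpow A m)"
  unfolding mWC_def mWG_def coreEP_eq_drazin_proj mpow_drazin_proj ..

lemma colsp_mWC_subset: "colsp (mWC m A) \<subseteq> colsp (mpow A (ind A))"
  using colsp_drazin_mult unfolding mWC_eq_drazin mpow.simps(2) by (metis matrix_mul_assoc)

lemma mWC_mult_on_core:
  assumes M: "colsp M \<subseteq> colsp (mpow A (ind A))"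
  shows "mWC m A ** M = drazin A ** M"
proof -
  have "proj (mpow A m) ** M = M"
    using M colsp_mpow_ind_subset by (blast intro: proj_mult_colsp)
  moreover have "proj (mpow A (ind A)) ** (mpow A m ** M) = mpow A m ** M"
    using M colsp_mpow_mult_in_core by (blast intro: proj_mult_colsp)
  ultimately have "mWC m A ** M = mpow (drazin A) (Suc m) ** mpow A m ** M"
    unfolding mWC_eq_drazin by (simp add: matrix_mul_assoc[symmetric] del: mpow.simps)
  then show ?thesis
    by (simp only: commuting_outer_inverse_mpow[OF drazin_outer drazin_commute, symmetric])
qed

lemma colsp_A_mult_in_core:
  "colsp M \<subseteq> colsp (mpow A (ind A)) \<Longrightarrow> colsp (A ** M) \<subseteq> colsp (mpow A (ind A))"
  using colsp_mpow_mult_in_core[of M A 1] by simp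

lemma mWC_A_mWC: "mWC m A ** A ** mWC m A = mWC m A"
proof -
  have "mWC m A ** A ** mWC m A = mWC m A ** (A ** mWC m A)"
    by (simp add: matrix_mul_assoc)
  also have "\<dots> = drazin A ** (A ** mWC m A)"
    by (rule mWC_mult_on_core[OF colsp_A_mult_in_core[OF colsp_mWC_subset]])
  also have "\<dots> = mWC m A"
    by (simp only: matrix_mul_assoc drazin_mult_A_on_core[OF colsp_mWC_subset])
  finally show ?thesis .
qed

lemma A_mult_mpow_mWC_2: "A ** mpow (mWC m A) 2 = mWC m A"
proof -
  have "A ** mpow (mWC m A) 2 = A ** (mWC m A ** mWC m A)"
    by (simp add: numeral_2_eq_2)
  also have "\<dots> = A ** (drazin A ** mWC m A)"
    by (simp only: mWC_mult_on_core[OF colsp_mWC_subset])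
  also have "\<dots> = mWC m A"
    by (simp only: matrix_mul_assoc drazin_commute drazin_mult_A_on_core[OF colsp_mWC_subset])
  finally show ?thesis .
qed

lemma mWC_mult_mpow_Suc: "ind A \<le> l \<Longrightarrow> mWC m A ** mpow A (Suc l) = mpow A l"
  using mWC_mult_on_core[of "mpow A (Suc l)" A m] colsp_mpow_ge_ind[of A "Suc l"]
  by (simp add: drazin_mult_mpow_Suc del: mpow.simps)

lemma colsp_mWC: "colsp (mWC m A) = colsp (mpow A (ind A))"
  using colsp_mWC_subset mWC_mult_mpow_Suc[of A "ind A" m] colsp_mult_subset
  by (metis order_refl subset_antisym)

lemma rank_mWC: "rank (mWC m A) = rank (mpow A (ind A))"
  by (rule rank_eq_if_colsp_eq[OF colsp_mWC])

lemma mWC_A_coreEP: "mWC m A ** A ** coreEP A = coreEP A"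
proof -
  have C: "colsp (coreEP A) \<subseteq> colsp (mpow A (ind A))"
    unfolding coreEP_eq_drazin_proj by (rule colsp_drazin_mult)
  have "mWC m A ** A ** coreEP A = mWC m A ** (A ** coreEP A)"
    by (simp only: matrix_mul_assoc)
  also have "\<dots> = drazin A ** (A ** coreEP A)"
    by (rule mWC_mult_on_core[OF colsp_A_mult_in_core[OF C]])
  also have "\<dots> = coreEP A"
    by (simp only: matrix_mul_assoc drazin_mult_A_on_core[OF C])
  finally show ?thesis .
qed

lemma coreEP_A_mWC: "coreEP A ** A ** mWC m A = mWC m A"
proof -
  have "proj (mpow A (ind A)) ** (A ** mWC m A) = A ** mWC m A"
    by (rule proj_mult_colsp[OF colsp_A_mult_in_core[OF colsp_mWC_subset]])
  then show ?thesis
    using drazin_mult_A_on_core[OF colsp_mWC_subset]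
    by (simp add: coreEP_eq_drazin_proj matrix_mul_assoc[symmetric])
qed

lemma inner_inverse_mWC:
  "A ** coreEP A ** A ** mWC m A ** (A ** coreEP A ** A) = A ** coreEP A ** A"
proof -
  have "coreEP A ** A ** coreEP A = coreEP A"
    using drazin_proj_outer by (simp add: coreEP_eq_drazin_proj matrix_mul_assoc)
  then show ?thesis
    using mWC_A_coreEP by (metis matrix_mul_assoc)
qed

lemma outer_inverse_mWC:
  "mWC m A ** (A ** coreEP A ** A) ** mWC m A = mWC m A"
  using mWC_A_coreEP coreEP_A_mWC by (metis matrix_mul_assoc)

lemma mWC_eq_drazin_proj_mpow:
  "ind A \<le> l \<Longrightarrow>
    mWC m A = mpow (drazin A) (Suc m) ** proj (mpow A l) ** mpow A m ** proj (mpow A m)"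
  using mWC_eq_drazin proj_cong[OF colsp_mpow_ge_ind] by metis

lemma mWC_eq_mp_inv:
  assumes "ind A \<le> l"
  shows "mWC m A = mpow A l ** mp_inv (mpow A (l + m + 1)) ** mpow A m ** proj (mpow A m)"
proof -
  let ?G = "mpow A (l + m + 1)"
  have "Suc m + l = l + m + 1"
    by simp
  then have "mpow A l = mpow (drazin A) (Suc m) ** ?G"
    using mpow_drazin_mult_mpow[OF assms, of "Suc m"] by metis
  then have "mpow A l ** mp_inv ?G = mpow (drazin A) (Suc m) ** proj ?G"
    by (simp only: proj_def matrix_mul_assoc)
  also have "\<dots> = mpow (drazin A) (Suc m) ** proj (mpow A (ind A))"
    using proj_cong[OF colsp_mpow_ge_ind, of A "l + m + 1"] assms by simp
  finally show ?thesis
    by (simp add: mWC_eq_drazin)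
qed

lemma nullsp_mWC:
  "nullsp (mWC m A) = nullsp (cstar (mpow A (ind A)) ** mpow A m ** proj (mpow A m))"
proof -
  let ?D = "drazin A" and ?P = "proj (mpow A (ind A))" and ?N = "mpow A m ** proj (mpow A m)"
  have X: "mWC m A = mpow ?D (Suc m) ** (?P ** ?N)"
    by (simp add: mWC_eq_drazin matrix_mul_assoc)
  have "mpow A (Suc m) ** mWC m A = mpow A (Suc m) ** mpow ?D (Suc m) ** (?P ** ?N)"
    by (simp only: X matrix_mul_assoc)
  also have "\<dots> = ?D ** A ** (?P ** ?N)"
    by (simp only: mpow_commute[OF mpow_commute[OF drazin_commute, symmetric], symmetric]
        commuting_outer_inverse_mult_eq_mpow[OF drazin_outer drazin_commute, symmetric])
  also have "\<dots> = ?P ** ?N"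
    by (rule drazin_mult_A_on_core) (metis colsp_mult_subset colsp_proj)
  finally have "nullsp (mWC m A) = nullsp (?P ** ?N)"
    by (rule nullsp_eq_if_mutual_factor[OF X sym])
  then show ?thesis
    by (simp only: nullsp_proj_mult matrix_mul_assoc[symmetric])
qed

lemma mWC_mult_mpow_Suc_self:
  "mWC m A ** mpow A (Suc m) = mpow (coreEP A) (Suc m) ** mpow A (2 * m + 1)"
proof -
  have "proj (mpow A m) ** mpow A (Suc m) = mpow A (Suc m)"
    by (metis proj_mult_self mpow_Suc_right matrix_mul_assoc)
  moreover have "mpow A m ** mpow A (Suc m) = mpow A (2 * m + 1)"
    by (simp add: mpow_add[symmetric] mult_2 del: mpow.simps)
  ultimately show ?thesis
    unfolding mWC_def mWG_def by (metis matrix_mul_assoc)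
qed

theorem theorem4p7:
  fixes A A1 :: "complex^'n^'n" and l m k :: nat
  assumes hk: "k = ind A" and hl: "l \<ge> k" and hm: "m \<ge> 1"
    and hA1: "A1 = A ** coreEP A ** A"
  shows "mWC m A ** A ** mWC m A = mWC m A
    \<and> (A1 ** mWC m A ** A1 = A1 \<and> mWC m A ** A1 ** mWC m A = mWC m A)
    \<and> A ** mpow (mWC m A) 2 = mWC m A
    \<and> mWC m A ** mpow A (Suc l) = mpow A l
    \<and> mWC m A = mpow (drazin A) (Suc m) ** proj (mpow A l) ** mpow A m ** proj (mpow A m)
    \<and> mWC m A = mpow A l ** mp_inv (mpow A (l + m + 1)) ** mpow A m ** proj (mpow A m)
    \<and> rank (mWC m A) = rank (mpow A k)
    \<and> colsp (mWC m A) = colsp (mpow A k)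
    \<and> nullsp (mWC m A) = nullsp (cstar (mpow A k) ** mpow A m ** proj (mpow A m))
    \<and> mWC m A ** mpow A (Suc m) = mpow (coreEP A) (Suc m) ** mpow A (2 * m + 1)"
proof -
  have l: "ind A \<le> l"
    using hk hl by simp
  show ?thesis
    unfolding hk hA1
    by (intro conjI mWC_A_mWC inner_inverse_mWC outer_inverse_mWC A_mult_mpow_mWC_2
        mWC_mult_mpow_Suc[OF l] mWC_eq_drazin_proj_mpow[OF l] mWC_eq_mp_inv[OF l]
        rank_mWC colsp_mWC nullsp_mWC mWC_mult_mpow_Suc_self)
qed

end
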